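(* Let $n\ge3$ and $j\ge0$. Then $\mathcal{N}_j\subseteq N_{\mathcal{B}}(\mathbb{Z}\mathcal{N}_{j-1})$, where $N_{\mathcal{B}}(\mathbb{Z}\mathcal{N}_{j-1})=\{b\in\mathcal{B}: [b,m]\in\mathbb{Z}\mathcal{N}_{j-1}\text{ for all } m\in\mathbb{Z}\mathcal{N}_{j-1}\}$ and $\mathbb{Z}\mathcal{N}_{j-1}$ is the $\mathbb{Z}$-span of $\mathcal{N}_{j-1}$ in $\mathfrak{L}(n)$.
   Context: Fix an integer $n\ge 3$. A partition is a sequence $\Lambda=(\lambda_j)_{j\ge1}$ of non-negative integers with finite support; $\mathrm{wt}(\Lambda)=\sum_j j\lambda_j$; $\mathrm{Part}(k)$ is the set of partitions with $\lambda_j=0$ for $j>k$. Write $x^\Lambda=\prod_j x_j^{\lambda_j}$, $\deg(x^\Lambda)=\sum_j\lambda_j$, and let $\partial_k$ be the partial derivative with respect to $x_k$. $\mathfrak{L}(n)$ is the free $\mathbb{Z}$-module with basis $\mathcal{B}=\{x^\Lambda\partial_k : 1\le k\le n,\ \Lambda\in\mathrm{Part}(k-1)\}$, a Lie ring with bracket defined on basis elements by $[x^\Lambda\partial_k,x^\Theta\partial_j]=\partial_j(x^\Lambda)x^\Theta\partial_k$ if $j<k$, $-x^\Lambda\partial_k(x^\Theta)\partial_j$ if $j>k$, $0$ if $j=k$, extended bilinearly. For an integer $i\ge-1$, let $r_i\in\{1,\dots,n-1\}$ with $i\equiv r_i\pmod{n-1}$ and $h_i=\lfloor (i-1)/(n-1)\rfloor+1$.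 Define $\mathrm{WD}(x^\Lambda\partial_k)=\mathrm{wt}(\Lambda)-\deg(x^\Lambda)+n-k$ and $\mathrm{lev}_i(x^\Lambda\partial_k)=h_i\,\mathrm{WD}(x^\Lambda\partial_k)+\deg(x^\Lambda)-1$. For $i\ge-1$, $\mathcal{N}_i=\{b\in\mathcal{B}: \mathrm{lev}_j(b)\le j\text{ for some integer } -1\le j\le i\}$. *)

theory Defs
  imports Main
begin

(* A partition Lambda = (lambda_j)_{j>=1} is represented by a function nat => nat;
   index 0 is unused and required to be 0. *)
type_synonym partition = "nat \<Rightarrow> nat"

(* basis element x^Lambda d_k is represented by the pair (Lambda, k) *)
type_synonym basis_elt = "partition \<times> nat"

(* elements of L(n): integer coordinate vectors w.r.t. the basis *)
type_synonym lelt = "basis_elt \<Rightarrow> int"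

definition Part :: "nat \<Rightarrow> partition set" where
  "Part k = {L. \<forall>j. (j = 0 \<or> j > k) \<longrightarrow> L j = 0}"

definition wt :: "partition \<Rightarrow> nat" where
  "wt L = (\<Sum>j\<in>{j. L j \<noteq> 0}. j * L j)"

definition pdeg :: "partition \<Rightarrow> nat" where
  "pdeg L = (\<Sum>j\<in>{j. L j \<noteq> 0}. L j)"

definition Bas :: "nat \<Rightarrow> basis_elt set" where
  "Bas n = {(L, k). 1 \<le> k \<and> k \<le> n \<and> L \<in> Part (k - 1)}"

definition Lmod :: "nat \<Rightarrow> lelt set" where
  "Lmod n = {v. finite {b. v b \<noteq> 0} \<and> {b. v b \<noteq> 0} \<subseteq> Bas n}"

definition bvec :: "basis_elt \<Rightarrow> lelt" where
  "bvec b = (\<lambda>d. if d = b then 1 else 0)"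

definition smul :: "int \<Rightarrow> lelt \<Rightarrow> lelt" where
  "smul c v = (\<lambda>d. c * v d)"

(* bracket of basis elements:
   [x^L d_k, x^T d_j] = d_j(x^L) x^T d_k   if j < k
                      = - x^L d_k(x^T) d_j if j > k
                      = 0                  if j = k *)
definition brb :: "basis_elt \<Rightarrow> basis_elt \<Rightarrow> lelt" where
  "brb b c = (case b of (L, k) \<Rightarrow> case c of (T, j) \<Rightarrow>
     if j < k then smul (int (L j)) (bvec ((\<lambda>i. L i + T i)(j := L j - 1 + T j), k))
     else if k < j then smul (- int (T k)) (bvec ((\<lambda>i. L i + T i)(k := L k + T k - 1), j))
     else (\<lambda>_. 0))"

definition br :: "lelt \<Rightarrow> lelt \<Rightarrow> lelt" where
  "br u v = (\<lambda>d. \<Sum>b\<in>{b. u b \<noteq> 0}. \<Sum>c\<in>{c. v c \<noteq> 0}. u b * v c * brb b c d)"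

definition zspan :: "basis_elt set \<Rightarrow> lelt set" where
  "zspan S = {v. \<exists>F a. finite F \<and> F \<subseteq> S \<and> v = (\<lambda>d. \<Sum>b\<in>F. a b * bvec b d)}"

definition WD :: "nat \<Rightarrow> basis_elt \<Rightarrow> int" where
  "WD n b = (case b of (L, k) \<Rightarrow> int (wt L) - int (pdeg L) + int n - int k)"

definition hh :: "nat \<Rightarrow> int \<Rightarrow> int" where
  "hh n i = (i - 1) div (int n - 1) + 1"

definition lev :: "nat \<Rightarrow> int \<Rightarrow> basis_elt \<Rightarrow> int" where
  "lev n i b = hh n i * WD n b + int (pdeg (fst b)) - 1"

definition NN :: "nat \<Rightarrow> int \<Rightarrow> basis_elt set" where
  "NN n i = {b \<in> Bas n. \<exists>j. -1 \<le> j \<and> j \<le> i \<and> lev n j b \<le> j}"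

definition normB :: "nat \<Rightarrow> lelt set \<Rightarrow> basis_elt set" where
  "normB n M = {b \<in> Bas n. \<forall>m\<in>M. br (bvec b) m \<in> M}"

end

theory Submission imports Defs begin

(* Write H = n - 1. As h_t is the ceiling of t / H, b lies in N_i iff some height h >= 0 gives
   h WD(b) + deg(b) - 1 <= min(i, h H); this is has_low_level with W = WD(b) and D = deg(b).
   A nonzero bracket of basis elements b, c is a basis element with W = W(b) + W(c) - H and
   D = D(b) + D(c) - 1. If hb and hc are heights for b in N_j and c in N_(j-1), then max(hb, hc)
   is a height for the bracket in N_(j-1): at that height its level is the level of one factor
   plus h (W - H) + D - 1 for the other, which is <= 0, and <= -1 when hc < hb. Both estimates
   only use that W <= H - D for basis elements of degree D <= 1. *)

lemma Part_support:
  assumes "L \<in> Part m" shows "{j. L j \<noteq> 0} \<subseteq> {1..m}"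
proof
  fix j assume "j \<in> {j. L j \<noteq> 0}"
  then have "j \<noteq> 0" "\<not> m < j" using assms unfolding Part_def by (cases j, auto)+
  then show "j \<in> {1..m}" by simp
qed

lemma wt_Part: "L \<in> Part m \<Longrightarrow> wt L = (\<Sum>j=1..m. j * L j)"
  unfolding wt_def by (rule sum.mono_neutral_left) (use Part_support[of L m] in auto)

lemma pdeg_Part: "L \<in> Part m \<Longrightarrow> pdeg L = (\<Sum>j=1..m. L j)"
  unfolding pdeg_def by (rule sum.mono_neutral_left) (use Part_support[of L m] in auto)

lemma Part_mono: "L \<in> Part m \<Longrightarrow> m \<le> m' \<Longrightarrow> L \<in> Part m'"
  unfolding Part_def by auto

lemma pdeg_le_wt:
  assumes "L \<in> Part m" shows "pdeg L \<le> wt L"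
  unfolding wt_Part[OF assms] pdeg_Part[OF assms] by (rule sum_mono) auto

lemma wt_le_mult_pdeg:
  assumes "L \<in> Part m" shows "wt L \<le> m * pdeg L"
  unfolding wt_Part[OF assms] pdeg_Part[OF assms] sum_distrib_left by (rule sum_mono) auto

lemma WD_nonneg: "b \<in> Bas n \<Longrightarrow> WD n b \<ge> 0"
  using pdeg_le_wt unfolding Bas_def WD_def by fastforce

lemma WD_le_if_pdeg_le_1:
  assumes "b \<in> Bas n" "pdeg (fst b) \<le> 1"
  shows "WD n b \<le> int n - 1 - int (pdeg (fst b))"
proof -
  obtain L k where b: "b = (L, k)" "1 \<le> k" "k \<le> n" "L \<in> Part (k - 1)"
    using assms(1) unfolding Bas_def by auto
  have "wt L \<le> (k - 1) * pdeg L" "pdeg L \<le> wt L"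
    using wt_le_mult_pdeg pdeg_le_wt b(4) by auto
  moreover have "pdeg L = 0 \<or> pdeg L = 1" using assms(2) b(1) by auto
  ultimately show ?thesis using b(1-3) unfolding WD_def by auto
qed

lemma hh_bounds:
  assumes "n \<ge> 3" "t \<ge> -1"
  shows "hh n t \<ge> 0" "t \<le> hh n t * (int n - 1)" "(hh n t - 1) * (int n - 1) < t"
proof -
  define H where "H = int n - 1"
  define q where "q = (t - 1) div H"
  define r where "r = (t - 1) mod H"
  have H: "H \<ge> 2" using assms(1) unfolding H_def by linarith
  have t: "t - 1 = q * H + r" and r: "0 \<le> r" "r < H"
    using H unfolding q_def r_def by simp_all
  have hh: "hh n t = q + 1" unfolding hh_def q_def H_def by simp
  have "q \<ge> -1"
  proof (rule ccontr)
    assume "\<not> q \<ge> -1"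
    then have "q * H \<le> -2 * H" using H by (intro mult_right_mono) auto
    then show False using t r assms(2) H by linarith
  qed
  then show "hh n t \<ge> 0" using hh by simp
  show "t \<le> hh n t * (int n - 1)" "(hh n t - 1) * (int n - 1) < t"
    using t r unfolding hh H_def[symmetric] by (simp_all add: distrib_right)
qed

lemma hh_mult:
  assumes "n \<ge> 3"
  shows "hh n (h * (int n - 1)) = h"
proof -
  define H where "H = int n - 1"
  have "H \<ge> 2" using assms unfolding H_def by linarith
  have "(h * H - 1) div H = ((H - 1) + (h - 1) * H) div H" by (simp add: algebra_simps)
  also have "\<dots> = h - 1" using \<open>H \<ge> 2\<close> by (simp add: div_pos_pos_trivial)
  finally show ?thesis unfolding hh_def H_def by simp
qed

definition has_low_level :: "int \<Rightarrow> int \<Rightarrow> int \<Rightarrow> int \<Rightarrow> bool" where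
  "has_low_level H i W D \<longleftrightarrow> (\<exists>h\<ge>0. h * W + D - 1 \<le> h * H \<and> h * W + D - 1 \<le> i)"

lemma NN_iff_has_low_level:
  assumes n: "n \<ge> 3" and i: "i \<ge> -1"
  shows "b \<in> NN n i \<longleftrightarrow>
    b \<in> Bas n \<and> has_low_level (int n - 1) i (WD n b) (int (pdeg (fst b)))"
proof
  assume "b \<in> NN n i"
  then obtain t where "b \<in> Bas n" "-1 \<le> t" "t \<le> i" "lev n t b \<le> t"
    unfolding NN_def by blast
  then show "b \<in> Bas n \<and> has_low_level (int n - 1) i (WD n b) (int (pdeg (fst b)))"
    using hh_bounds[OF n \<open>-1 \<le> t\<close>] unfolding has_low_level_def lev_def
    by (intro conjI exI[of _ "hh n t"]) auto
next
  assume "b \<in> Bas n \<and> has_low_level (int n - 1) i (WD n b) (int (pdeg (fst b)))"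
  then obtain h where b: "b \<in> Bas n" and h: "h \<ge> 0"
      "h * WD n b + int (pdeg (fst b)) - 1 \<le> h * (int n - 1)"
      "h * WD n b + int (pdeg (fst b)) - 1 \<le> i"
    unfolding has_low_level_def by blast
  have "\<exists>t. -1 \<le> t \<and> t \<le> i \<and> lev n t b \<le> t"
  proof (cases "h < hh n i")
    case True
    \<comment> \<open>the largest t of height h is h (n - 1), and it does not exceed i\<close>
    have "(hh n i - 1) * (int n - 1) < i" using hh_bounds[OF n i] by simp
    moreover have "h * (int n - 1) \<le> (hh n i - 1) * (int n - 1)"
      using True n by (intro mult_right_mono) auto
    moreover have "h * (int n - 1) \<ge> 0" using h(1) n by simp
    ultimately show ?thesis using h(2) hh_mult[OF n] unfolding lev_def
      by (intro exI[of _ "h * (int n - 1)"]) auto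
  next
    case False
    then have "hh n i * WD n b \<le> h * WD n b" using WD_nonneg[OF b] by (simp add: mult_right_mono)
    then show ?thesis using h(3) i unfolding lev_def by (intro exI[of _ i]) auto
  qed
  with b show "b \<in> NN n i" unfolding NN_def by blast
qed

lemma has_low_level_bracket:
  fixes H j Wb Db Wc Dc :: int
  assumes "Db \<ge> 0" "Dc \<ge> 0"
    and Wb_small: "Db \<le> 1 \<Longrightarrow> Wb \<le> H - Db" and Wc_small: "Dc \<le> 1 \<Longrightarrow> Wc \<le> H - Dc"
    and b: "has_low_level H j Wb Db" and c: "has_low_level H (j - 1) Wc Dc"
  shows "has_low_level H (j - 1) (Wb + Wc - H) (Db + Dc - 1)"
proof -
  obtain hb where hb: "hb \<ge> 0" "hb * Wb + Db - 1 \<le> hb * H" "hb * Wb + Db - 1 \<le> j"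
    using b unfolding has_low_level_def by blast
  obtain hc where hc: "hc \<ge> 0" "hc * Wc + Dc - 1 \<le> hc * H" "hc * Wc + Dc - 1 \<le> j - 1"
    using c unfolding has_low_level_def by blast
  have le_H: "W \<le> H"
    if "h \<ge> 0" "h * W + D - 1 \<le> h * H" "D \<ge> 0" "D \<le> 1 \<Longrightarrow> W \<le> H - D" for h W D :: int
  proof (rule ccontr)
    assume "\<not> W \<le> H"
    then have "h * (W - H) \<ge> 0" using that(1) by simp
    moreover have "D \<ge> 2" using \<open>\<not> W \<le> H\<close> that(3,4) by linarith
    ultimately show False using that(2) by (simp add: algebra_simps)
  qed
  have Wb_le: "Wb \<le> H" and Wc_le: "Wc \<le> H"
    using le_H[OF hb(1,2)] le_H[OF hc(1,2)] assms(1-4) by auto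
  show ?thesis
  proof (cases "hb \<le> hc")
    case True
    have "(hc - hb) * (Wb - H) \<le> 0" using True Wb_le by (simp add: mult_nonneg_nonpos)
    then have "hc * (Wb - H) + Db - 1 \<le> 0" using hb(2) by (simp add: algebra_simps)
    then show ?thesis using hc unfolding has_low_level_def
      by (intro exI[of _ hc]) (simp add: algebra_simps)
  next
    case False
    have "hb * (Wc - H) + Dc - 1 \<le> -1"
    proof (cases "Wc = H")
      case True
      then have "Dc = 0" using hc(2) Wc_small \<open>Dc \<ge> 0\<close> by (simp add: algebra_simps)
      then show ?thesis using True by simp
    next
      case False
      with \<open>\<not> hb \<le> hc\<close> Wc_le have "(hb - hc) * (H - Wc) \<ge> 1"
        by (simp add: int_one_le_iff_zero_less)
      then show ?thesis using hc(2) by (simp add: algebra_simps)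
    qed
    then show ?thesis using hb unfolding has_low_level_def
      by (intro exI[of _ hb]) (simp add: algebra_simps)
  qed
qed

lemma Bas_bracket_term:
  assumes b: "(L, k) \<in> Bas n" and c: "(T, l) \<in> Bas n" and "l < k" and "L l \<noteq> 0"
  defines "P \<equiv> (\<lambda>i. L i + T i)(l := L l - 1 + T l)"
  shows "(P, k) \<in> Bas n" "WD n (P, k) = WD n (L, k) + WD n (T, l) - (int n - 1)"
    "int (pdeg P) = int (pdeg L) + int (pdeg T) - 1"
proof -
  have k: "1 \<le> k" "k \<le> n" and PL: "L \<in> Part (k - 1)" using b unfolding Bas_def by auto
  have l: "l \<in> {1..k-1}" and PT: "T \<in> Part (k - 1)"
    using c \<open>l < k\<close> Part_mono unfolding Bas_def by auto
  have PP: "P \<in> Part (k - 1)" using PL PT l unfolding Part_def P_def by auto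
  then show "(P, k) \<in> Bas n" using k unfolding Bas_def by auto
  have P: "int (P i) = int (L i) + int (T i) - (if i = l then 1 else 0)" for i
    using \<open>L l \<noteq> 0\<close> unfolding P_def by auto
  have "int (pdeg P) = (\<Sum>i=1..k-1. int (L i) + int (T i) - (if i = l then 1 else 0))"
    unfolding pdeg_Part[OF PP] P[symmetric] by simp
  also have "\<dots> = int (pdeg L) + int (pdeg T) - 1"
    using l by (simp add: sum.distrib sum_subtractf pdeg_Part[OF PL] pdeg_Part[OF PT])
  finally show pdeg: "int (pdeg P) = int (pdeg L) + int (pdeg T) - 1" .
  have "int (wt P) = (\<Sum>i=1..k-1. int i * (int (L i) + int (T i) - (if i = l then 1 else 0)))"
    unfolding wt_Part[OF PP] P[symmetric] by simp
  also have "\<dots> = int (wt L) + int (wt T) - int l"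
    using l by (simp add: algebra_simps sum.distrib sum_subtractf wt_Part[OF PL] wt_Part[OF PT]
        if_distrib[of "(*) _"] cong: if_cong)
  finally show "WD n (P, k) = WD n (L, k) + WD n (T, l) - (int n - 1)"
    unfolding WD_def using pdeg by simp
qed

lemma brb_nonzeroD:
  assumes "b \<in> Bas n" "c \<in> Bas n" "brb b c d \<noteq> 0"
  shows "d \<in> Bas n" "WD n d = WD n b + WD n c - (int n - 1)"
    "int (pdeg (fst d)) = int (pdeg (fst b)) + int (pdeg (fst c)) - 1"
proof -
  obtain L k T l where bc: "b = (L, k)" "c = (T, l)" by fastforce
  have "l < k \<or> k < l" using assms(3) unfolding bc brb_def by (auto split: if_splits)
  then have "d \<in> Bas n \<and> WD n d = WD n b + WD n c - (int n - 1)
    \<and> int (pdeg (fst d)) = int (pdeg (fst b)) + int (pdeg (fst c)) - 1"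
  proof
    assume "l < k"
    with assms(3) have "L l \<noteq> 0" "d = ((\<lambda>i. L i + T i)(l := L l - 1 + T l), k)"
      unfolding bc brb_def smul_def bvec_def by (auto split: if_splits)
    with Bas_bracket_term[OF assms(1,2)[unfolded bc] \<open>l < k\<close>] show ?thesis
      unfolding bc by auto
  next
    assume "k < l"
    with assms(3) have "T k \<noteq> 0" "d = ((\<lambda>i. T i + L i)(k := T k - 1 + L k), l)"
      unfolding bc brb_def smul_def bvec_def by (auto split: if_splits simp: add.commute)
    with Bas_bracket_term[OF assms(2,1)[unfolded bc] \<open>k < l\<close>] show ?thesis
      unfolding bc by auto
  qed
  then show "d \<in> Bas n" "WD n d = WD n b + WD n c - (int n - 1)"
    "int (pdeg (fst d)) = int (pdeg (fst b)) + int (pdeg (fst c)) - 1" by auto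
qed

lemma brb_NN_closed:
  assumes n: "n \<ge> 3" and "j \<ge> 0" and b: "b \<in> NN n j" and c: "c \<in> NN n (j - 1)"
    and "brb b c d \<noteq> 0"
  shows "d \<in> NN n (j - 1)"
proof -
  have "b \<in> Bas n" "has_low_level (int n - 1) j (WD n b) (int (pdeg (fst b)))"
    using b NN_iff_has_low_level[OF n, of j] \<open>j \<ge> 0\<close> by auto
  moreover have "c \<in> Bas n" "has_low_level (int n - 1) (j - 1) (WD n c) (int (pdeg (fst c)))"
    using c NN_iff_has_low_level[OF n, of "j - 1"] \<open>j \<ge> 0\<close> by auto
  ultimately have "d \<in> Bas n" "has_low_level (int n - 1) (j - 1) (WD n d) (int (pdeg (fst d)))"
    using brb_nonzeroD[of b n c d] \<open>brb b c d \<noteq> 0\<close>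
      WD_le_if_pdeg_le_1[of b n] WD_le_if_pdeg_le_1[of c n]
    by (auto intro!: has_low_level_bracket)
  then show ?thesis using NN_iff_has_low_level[OF n, of "j - 1"] \<open>j \<ge> 0\<close> by auto
qed

lemma zspan_eq_finite_support: "zspan S = {v. finite {b. v b \<noteq> 0} \<and> {b. v b \<noteq> 0} \<subseteq> S}"
proof (intro set_eqI iffI)
  fix v :: lelt assume "v \<in> zspan S"
  then obtain F a where F: "finite F" "F \<subseteq> S" "v = (\<lambda>d. \<Sum>b\<in>F. a b * bvec b d)"
    unfolding zspan_def by auto
  have "v d = (if d \<in> F then a d else 0)" for d
    unfolding F(3) bvec_def using F(1) by (simp add: if_distrib[of "(*) _"] cong: if_cong)
  then have "{b. v b \<noteq> 0} \<subseteq> F" by auto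
  then show "v \<in> {v. finite {b. v b \<noteq> 0} \<and> {b. v b \<noteq> 0} \<subseteq> S}"
    using F by (auto intro: finite_subset)
next
  fix v :: lelt assume v: "v \<in> {v. finite {b. v b \<noteq> 0} \<and> {b. v b \<noteq> 0} \<subseteq> S}"
  have "v = (\<lambda>d. \<Sum>b\<in>{b. v b \<noteq> 0}. v b * bvec b d)"
    using v unfolding bvec_def by (auto simp: if_distrib[of "(*) _"] cong: if_cong)
  then show "v \<in> zspan S" using v unfolding zspan_def by blast
qed

lemma finite_brb_support: "finite {d. brb b c d \<noteq> 0}"
proof -
  obtain L k T l where "b = (L, k)" "c = (T, l)" by fastforce
  then have "\<exists>e. {d. brb b c d \<noteq> 0} \<subseteq> {e}" unfolding brb_def smul_def bvec_def by auto
  then show ?thesis using finite_subset by blast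
qed

lemma br_bvec_support:
  "{d. br (bvec b) m d \<noteq> 0} \<subseteq> (\<Union>c\<in>{c. m c \<noteq> 0}. {d. brb b c d \<noteq> 0})"
proof
  fix d assume "d \<in> {d. br (bvec b) m d \<noteq> 0}"
  moreover have "{c. bvec b c \<noteq> 0} = {b}" unfolding bvec_def by auto
  ultimately have "(\<Sum>c\<in>{c. m c \<noteq> 0}. m c * brb b c d) \<noteq> 0"
    unfolding br_def by (simp add: bvec_def)
  then obtain c where "m c \<noteq> 0" "brb b c d \<noteq> 0"
    by (metis (mono_tags, lifting) mem_Collect_eq mult_eq_0_iff sum.neutral)
  then show "d \<in> (\<Union>c\<in>{c. m c \<noteq> 0}. {d. brb b c d \<noteq> 0})" by blast
qed

lemma br_bvec_in_zspan:
  assumes "\<And>c d. c \<in> S \<Longrightarrow> brb b c d \<noteq> 0 \<Longrightarrow> d \<in> S" and "m \<in> zspan S"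
  shows "br (bvec b) m \<in> zspan S"
proof -
  have m: "finite {c. m c \<noteq> 0}" "{c. m c \<noteq> 0} \<subseteq> S"
    using assms(2) unfolding zspan_eq_finite_support by auto
  have "finite (\<Union>c\<in>{c. m c \<noteq> 0}. {d. brb b c d \<noteq> 0})"
    using m(1) finite_brb_support by blast
  moreover have "(\<Union>c\<in>{c. m c \<noteq> 0}. {d. brb b c d \<noteq> 0}) \<subseteq> S" using assms(1) m(2) by blast
  ultimately show ?thesis
    unfolding zspan_eq_finite_support using br_bvec_support[of b m] by (auto intro: finite_subset)
qed

theorem corollary3p2:
  fixes n :: nat and j :: int
  assumes "n \<ge> 3" and "j \<ge> 0"
  shows "NN n j \<subseteq> normB n (zspan (NN n (j - 1)))"
proof
  fix b assume b: "b \<in> NN n j"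
  then have "b \<in> Bas n" unfolding NN_def by auto
  moreover have "br (bvec b) m \<in> zspan (NN n (j - 1))" if "m \<in> zspan (NN n (j - 1))" for m
    using br_bvec_in_zspan[OF brb_NN_closed[OF assms b] that] .
  ultimately show "b \<in> normB n (zspan (NN n (j - 1)))" unfolding normB_def by blast
qed

end
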